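(* Let $K\ge1$, let $P^0,P^1,\ldots,P^K$ be real polynomials and $c_1,\ldots,c_K$ real constants, and let \[ F(x)=P^0(x)+\sum_{j=1}^K P^j(x)\frac{1}{\sqrt{x+c_j}}, \] considered on the interval $(-\min_j c_j,\infty)$, and assume $F$ is not identically zero there. Then the number $\mathcal Z(F)$ of real zeros of $F$ in this interval, counted with multiplicity, satisfies \[ \mathcal Z(F)\le K\left(\max_{j=1,\ldots,K}\deg(P^j)+1\right)+\deg(P^0), \] with the convention $\deg(0)=-1$. *)

theory Defs
  imports "HOL-Analysis.Analysis" "HOL-Computational_Algebra.Polynomial" "HOL-Library.Extended_Nat"
begin

definition deg :: "real poly \<Rightarrow> int" where
  "deg p = (if p = 0 then -1 else int (degree p))"

definition zero_mult :: "(real \<Rightarrow> real) \<Rightarrow> real \<Rightarrow> enat" where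
  "zero_mult f x = Sup (enat ` {m. \<forall>k<m. (deriv ^^ k) f x = 0})"

definition num_zeros :: "(real \<Rightarrow> real) \<Rightarrow> real set \<Rightarrow> enat" where
  "num_zeros f I = (if finite {x \<in> I. f x = 0}
      then (\<Sum>x\<in>{x \<in> I. f x = 0}. zero_mult f x) else \<infinity>)"

end

theory Submission
  imports Defs
begin

text \<open>
  Write \<open>F\<close> as a sum \<open>f(t) = \<Sum>\<^sub>i A\<^sub>i(t) l\<^sub>i(t) powr (d + 1 - m\<^sub>i)\<close> with linear functions
  \<open>l\<^sub>i > 0\<close> on the interval and \<open>deg A\<^sub>i < m\<^sub>i\<close>: take \<open>l\<^sub>0 = 1\<close>, \<open>m\<^sub>0 = deg P\<^sub>0 + 1\<close> and, for
  \<open>j \<ge> 1\<close>, \<open>l\<^sub>j(t) = t + c\<^sub>j\<close>, \<open>m\<^sub>j = N + 1\<close>, \<open>d = N - 1/2\<close>, where \<open>N\<close> is the largest \<open>deg P\<^sub>j\<close>.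

  Pick \<open>j\<close> with \<open>A\<^sub>j \<noteq> 0\<close>. Rolle's theorem for \<open>l\<^sub>j powr (-d) * f\<close> puts a zero of
  \<open>H = l\<^sub>j f' - d l\<^sub>j' f\<close> between any two zeros of \<open>f\<close>, and since the \<open>k\<close>-th derivative of \<open>H\<close> is
  \<open>l\<^sub>j f\<^bsup>(k+1)\<^esup> + (k - d) l\<^sub>j' f\<^bsup>(k)\<^esup>\<close>, a zero of \<open>f\<close> of order \<open>r\<close> is a zero of \<open>H\<close> of order at least
  \<open>r - 1\<close>. Hence \<open>Z(f) \<le> Z(H) + 1\<close>. Now \<open>H\<close> is a sum of the same shape with \<open>m\<^sub>j\<close> lowered by one
  and the other \<open>m\<^sub>i\<close> unchanged: every summand of \<open>f\<close> grows at most like \<open>t\<^sup>d\<close>, so in the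
  summands \<open>i \<noteq> j\<close> of \<open>H\<close> the top coefficients cancel. Induction on \<open>\<Sum> m\<^sub>i\<close> gives
  \<open>Z(f) < \<Sum> m\<^sub>i = K (N + 1) + deg P\<^sub>0 + 1\<close>; if \<open>H\<close> vanishes identically, \<open>l\<^sub>j powr (-d) * f\<close>
  is constant and \<open>f\<close> has no zeros.
\<close>

section \<open>Multiplicities of zeros\<close>

lemma higher_deriv_eq_chain:
  assumes "open J" and "\<forall>k. \<forall>x\<in>J. (g k has_real_derivative g (Suc k) x) (at x)"
  shows "\<forall>x\<in>J. (deriv ^^ k) (g 0) x = g k x"
proof (induction k)
  case (Suc k)
  show ?case
  proof
    fix x assume x: "x \<in> J"
    have "eventually (\<lambda>y. (deriv ^^ k) (g 0) y = g k y) (nhds x)"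
      using eventually_nhds_in_open[OF assms(1) x] Suc by (auto elim: eventually_mono)
    then have "(deriv ^^ Suc k) (g 0) x = deriv (g k) x"
      using deriv_cong_ev[OF _ refl] by simp
    also have "\<dots> = g (Suc k) x"
      using assms(2) x by (simp add: DERIV_imp_deriv)
    finally show "(deriv ^^ Suc k) (g 0) x = g (Suc k) x" .
  qed
qed simp

lemma higher_deriv_cong_open:
  assumes "open J" and "\<forall>x\<in>J. f x = g x"
  shows "\<forall>x\<in>J. (deriv ^^ k) f x = (deriv ^^ k) g x"
proof (induction k)
  case (Suc k)
  show ?case
  proof
    fix x assume x: "x \<in> J"
    have "eventually (\<lambda>y. (deriv ^^ k) f y = (deriv ^^ k) g y) (nhds x)"
      using eventually_nhds_in_open[OF assms(1) x] Suc by (auto elim: eventually_mono)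
    then show "(deriv ^^ Suc k) f x = (deriv ^^ Suc k) g x"
      using deriv_cong_ev[OF _ refl] by simp
  qed
qed (use assms in simp)

lemma num_zeros_cong_open:
  assumes "open J" and "\<forall>x\<in>J. f x = g x"
  shows "num_zeros f J = num_zeros g J"
proof -
  have zeros: "{x \<in> J. f x = 0} = {x \<in> J. g x = 0}"
    using assms(2) by auto
  have "\<forall>x\<in>J. zero_mult f x = zero_mult g x"
    using higher_deriv_cong_open[OF assms] unfolding zero_mult_def by auto
  then show ?thesis
    unfolding num_zeros_def zeros by (auto intro: sum.cong)
qed

lemma zero_mult_eq_0:
  assumes "f x \<noteq> 0"
  shows "zero_mult f x = 0"
proof -
  have "{m. \<forall>k<m. (deriv ^^ k) f x = 0} = {0}"
    using assms by (auto elim: allE[of _ 0])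
  then show ?thesis
    unfolding zero_mult_def by (simp add: zero_enat_def)
qed

lemma zero_mult_ge_1:
  assumes "f x = 0"
  shows "1 \<le> zero_mult f x"
proof -
  have "enat 1 \<le> zero_mult f x"
    unfolding zero_mult_def using assms by (intro Sup_upper) auto
  then show ?thesis
    by (simp add: one_enat_def)
qed

lemma zero_mult_le_Suc:
  assumes "\<And>k. (deriv ^^ k) h x = u k * (deriv ^^ Suc k) f x + v k * (deriv ^^ k) f x"
  shows "zero_mult f x \<le> zero_mult h x + 1"
  unfolding zero_mult_def
proof (rule Sup_least)
  fix y assume "y \<in> enat ` {m. \<forall>k<m. (deriv ^^ k) f x = 0}"
  then obtain m where y: "y = enat m" and m: "\<forall>k<m. (deriv ^^ k) f x = 0"
    by auto
  show "y \<le> Sup (enat ` {m. \<forall>k<m. (deriv ^^ k) h x = 0}) + 1"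
  proof (cases m)
    case (Suc m')
    have "\<forall>k<m'. (deriv ^^ k) h x = 0"
      using m assms Suc by auto
    then have "enat m' \<le> Sup (enat ` {m. \<forall>k<m. (deriv ^^ k) h x = 0})"
      by (intro Sup_upper) auto
    then show ?thesis
      using y Suc by (simp add: eSuc_enat[symmetric] eSuc_plus_1 add_right_mono)
  qed (simp add: y zero_enat_def[symmetric])
qed

section \<open>Counting zeros by Rolle's theorem\<close>

lemma exists_interlacing_subset:
  fixes S Z :: "'a::linorder set"
  assumes "\<forall>x\<in>S. \<forall>y\<in>S. x < y \<longrightarrow> (\<exists>z\<in>Z. x < z \<and> z < y)"
    and "finite S" and "card S = Suc n"
  shows "\<exists>T\<subseteq>Z. finite T \<and> card T = n \<and> T \<inter> S = {} \<and> (\<forall>t\<in>T. Min S < t \<and> t < Max S)"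
  using assms
proof (induction n arbitrary: S)
  case 0
  then show ?case by (intro exI[of _ "{}"]) auto
next
  case (Suc n)
  define S' where "S' = S - {Max S}"
  have "S \<noteq> {}" using Suc.prems by auto
  then have max_S: "Max S \<in> S" using Suc.prems by simp
  have S': "finite S'" "card S' = Suc n" "S' \<subseteq> S"
    unfolding S'_def using Suc.prems max_S by auto
  then have "S' \<noteq> {}" by auto
  obtain T' where T': "T' \<subseteq> Z" "finite T'" "card T' = n" "T' \<inter> S' = {}"
      "\<forall>t\<in>T'. Min S' < t \<and> t < Max S'"
    using Suc.IH[of S'] Suc.prems(1) S' by blast
  have max_S': "Max S' \<in> S'"
    using S' \<open>S' \<noteq> {}\<close> by simp
  then have "Max S' < Max S"
    using S' Suc.prems(2) unfolding S'_def by (simp add: order.strict_iff_order)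
  then obtain z where z: "z \<in> Z" "Max S' < z" "z < Max S"
    using Suc.prems(1) max_S max_S' S'(3) by blast
  have "Min S \<le> Min S'"
    using S' \<open>S' \<noteq> {}\<close> Suc.prems(2) by (intro Min_antimono)
  moreover have "Min S' \<le> Max S'"
    using S' \<open>S' \<noteq> {}\<close> by simp
  ultimately have "\<forall>t\<in>insert z T'. Min S < t \<and> t < Max S"
    using T'(5) z \<open>Max S' < Max S\<close> by fastforce
  moreover have "z \<notin> S"
  proof
    assume "z \<in> S"
    then have "z \<in> S'" using z(3) unfolding S'_def by simp
    then show False using z(2) S'(1) by (simp add: leD)
  qed
  moreover have "z \<notin> T'" "Max S \<notin> T'"
    using T'(5) z \<open>Max S' < Max S\<close> by fastforce+
  ultimately show ?case
    using T' z unfolding S'_def by (intro exI[of _ "insert z T'"]) auto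
qed

lemma num_zeros_le_Suc_interlacing:
  fixes f h :: "real \<Rightarrow> real"
  assumes mult: "\<forall>x\<in>J. f x = 0 \<longrightarrow> zero_mult f x \<le> zero_mult h x + 1"
    and between: "\<forall>x\<in>J. \<forall>y\<in>J. x < y \<longrightarrow> f x = 0 \<longrightarrow> f y = 0 \<longrightarrow> (\<exists>z\<in>J. x < z \<and> z < y \<and> h z = 0)"
  shows "num_zeros f J \<le> num_zeros h J + 1"
proof -
  define Zf where "Zf = {x \<in> J. f x = 0}"
  define Zh where "Zh = {x \<in> J. h x = 0}"
  have interlaced: "\<forall>x\<in>Zf. \<forall>y\<in>Zf. x < y \<longrightarrow> (\<exists>z\<in>Zh. x < z \<and> z < y)"
    using between unfolding Zf_def Zh_def by fastforce
  show ?thesis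
  proof (cases "finite Zh")
    case False
    then show ?thesis unfolding num_zeros_def Zh_def[symmetric] by simp
  next
    case fin_h: True
    have fin_f: "finite Zf"
    proof (rule ccontr)
      assume "infinite Zf"
      then obtain S where S: "S \<subseteq> Zf" "finite S" "card S = Suc (Suc (card Zh))"
        using infinite_arbitrarily_large by blast
      then have "\<forall>x\<in>S. \<forall>y\<in>S. x < y \<longrightarrow> (\<exists>z\<in>Zh. x < z \<and> z < y)"
        using interlaced by blast
      then obtain T where "T \<subseteq> Zh" "card T = Suc (card Zh)"
        using exists_interlacing_subset[OF _ S(2,3)] by metis
      then show False using card_mono[OF fin_h, of T] by simp
    qed
    show ?thesis
    proof (cases "Zf = {}")
      case True
      then show ?thesis unfolding num_zeros_def Zf_def[symmetric] by simp
    next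
      case False
      then obtain n where card_f: "card Zf = Suc n"
        using fin_f by (cases "card Zf") auto
      then obtain T where T: "T \<subseteq> Zh" "finite T" "card T = n" "T \<inter> Zf = {}"
        using exists_interlacing_subset[OF interlaced fin_f] by blast
      have "(\<Sum>x\<in>Zf. zero_mult f x) \<le> (\<Sum>x\<in>Zf. zero_mult h x + 1)"
        using mult unfolding Zf_def by (intro sum_mono) auto
      also have "\<dots> = (\<Sum>x\<in>Zf \<inter> Zh. zero_mult h x) + (\<Sum>x\<in>T. 1) + 1"
      proof -
        have "(\<Sum>x\<in>Zf. zero_mult h x) = (\<Sum>x\<in>Zf \<inter> Zh. zero_mult h x)"
          using fin_f zero_mult_eq_0 unfolding Zf_def Zh_def
          by (intro sum.mono_neutral_right) auto
        then show ?thesis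
          using card_f T(3) by (simp add: sum.distrib add.assoc)
      qed
      also have "\<dots> \<le> (\<Sum>x\<in>Zf \<inter> Zh. zero_mult h x) + (\<Sum>x\<in>T. zero_mult h x) + 1"
        using T(1) zero_mult_ge_1 unfolding Zh_def
        by (intro add_right_mono add_left_mono sum_mono) auto
      also have "\<dots> = (\<Sum>x\<in>(Zf \<inter> Zh) \<union> T. zero_mult h x) + 1"
        using T fin_f by (subst sum.union_disjoint) auto
      also have "\<dots> \<le> (\<Sum>x\<in>Zh. zero_mult h x) + 1"
        using T fin_h by (intro add_right_mono sum_mono2) auto
      finally show ?thesis
        unfolding num_zeros_def Zf_def[symmetric] Zh_def[symmetric] using fin_f fin_h by simp
    qed
  qed
qed

lemma weighted_mvt:
  fixes f f' :: "real \<Rightarrow> real"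
  assumes "connected J"
    and f: "\<forall>x\<in>J. (f has_real_derivative f' x) (at x)"
    and pos: "\<forall>x\<in>J. \<alpha> * x + \<beta> > 0"
    and "a \<in> J" "b \<in> J" "a < b"
  obtains z where "a < z" "z < b"
    "(\<alpha> * b + \<beta>) powr - d * f b - (\<alpha> * a + \<beta>) powr - d * f a
       = (b - a) * ((\<alpha> * z + \<beta>) powr (- d - 1) * ((\<alpha> * z + \<beta>) * f' z - d * \<alpha> * f z))"
proof -
  have "{a..b} \<subseteq> J"
    using connected_contains_Icc assms by blast
  have "((\<lambda>x. (\<alpha> * x + \<beta>) powr - d * f x) has_real_derivative
      (\<alpha> * z + \<beta>) powr (- d - 1) * ((\<alpha> * z + \<beta>) * f' z - d * \<alpha> * f z)) (at z)"
    if "z \<in> J" for z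
  proof -
    have l: "\<alpha> * z + \<beta> > 0" using pos that by blast
    have "((\<lambda>x. (\<alpha> * x + \<beta>) powr - d * f x) has_real_derivative
        - d * (\<alpha> * z + \<beta>) powr (- d - 1) * \<alpha> * f z + (\<alpha> * z + \<beta>) powr - d * f' z) (at z)"
      using f that l by (auto intro!: derivative_eq_intros)
    moreover have "(\<alpha> * z + \<beta>) powr - d = (\<alpha> * z + \<beta>) * (\<alpha> * z + \<beta>) powr (- d - 1)"
      using l by (simp add: powr_diff)
    ultimately show ?thesis by (simp add: algebra_simps)
  qed
  then have "\<And>z. a \<le> z \<Longrightarrow> z \<le> b \<Longrightarrow> ((\<lambda>x. (\<alpha> * x + \<beta>) powr - d * f x) has_real_derivative
      (\<alpha> * z + \<beta>) powr (- d - 1) * ((\<alpha> * z + \<beta>) * f' z - d * \<alpha> * f z)) (at z)"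
    using \<open>{a..b} \<subseteq> J\<close> by auto
  from MVT2[OF \<open>a < b\<close> this] show ?thesis
    using that by blast
qed

lemma weighted_rolle:
  fixes f f' :: "real \<Rightarrow> real"
  assumes "connected J"
    and "\<forall>x\<in>J. (f has_real_derivative f' x) (at x)"
    and pos: "\<forall>x\<in>J. \<alpha> * x + \<beta> > 0"
    and "a \<in> J" "b \<in> J" "a < b" "f a = 0" "f b = 0"
  obtains z where "a < z" "z < b" "(\<alpha> * z + \<beta>) * f' z - d * \<alpha> * f z = 0"
proof -
  obtain z where z: "a < z" "z < b"
    "(b - a) * ((\<alpha> * z + \<beta>) powr (- d - 1) * ((\<alpha> * z + \<beta>) * f' z - d * \<alpha> * f z)) = 0"
    using weighted_mvt[OF assms(1-6), of d] assms(7,8) by auto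
  have "\<alpha> * z + \<beta> > 0"
    using pos connected_contains_Icc[OF assms(1,4,5)] z(1,2) by (auto simp: subset_iff)
  then show ?thesis
    using that z \<open>a < b\<close> by simp
qed

lemma weighted_deriv_eq_0_imp_zero_everywhere:
  fixes f f' :: "real \<Rightarrow> real"
  assumes "connected J"
    and "\<forall>x\<in>J. (f has_real_derivative f' x) (at x)"
    and "\<forall>x\<in>J. \<alpha> * x + \<beta> > 0"
    and "\<forall>x\<in>J. (\<alpha> * x + \<beta>) * f' x - d * \<alpha> * f x = 0"
    and "x \<in> J" "y \<in> J" "f x = 0"
  shows "f y = 0"
proof -
  define W where "W t = (\<alpha> * t + \<beta>) powr - d * f t" for t
  have W_eq: "W a = W b" if ab: "a \<in> J" "b \<in> J" "a < b" for a b
  proof -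
    obtain z where z: "a < z" "z < b"
      "W b - W a = (b - a) * ((\<alpha> * z + \<beta>) powr (- d - 1) * ((\<alpha> * z + \<beta>) * f' z - d * \<alpha> * f z))"
      using weighted_mvt[OF assms(1-3) ab, of d] unfolding W_def by blast
    have "z \<in> J"
      using connected_contains_Icc[OF assms(1) ab(1,2)] z(1,2) by (auto simp: subset_iff)
    then show ?thesis
      using z(3) assms(4) by simp
  qed
  have "W y = W x"
    using W_eq assms(5,6) by (cases x y rule: linorder_cases) auto
  then show "f y = 0"
    using assms(3,6,7) unfolding W_def by fastforce
qed

lemma num_zeros_le_Suc_weighted_deriv:
  fixes g :: "nat \<Rightarrow> real \<Rightarrow> real"
  assumes "open J" "connected J"
    and g: "\<forall>k. \<forall>x\<in>J. (g k has_real_derivative g (Suc k) x) (at x)"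
    and pos: "\<forall>x\<in>J. \<alpha> * x + \<beta> > 0"
    and H: "\<forall>x\<in>J. H x = (\<alpha> * x + \<beta>) * g 1 x - d * \<alpha> * g 0 x"
  shows "num_zeros (g 0) J \<le> num_zeros H J + 1"
proof (rule num_zeros_le_Suc_interlacing)
  \<comment> \<open>\<open>hs k\<close> is the \<open>k\<close>-th derivative of \<open>H\<close>, by Leibniz' rule.\<close>
  define hs where "hs k x = (\<alpha> * x + \<beta>) * g (Suc k) x + (real k * \<alpha> - d * \<alpha>) * g k x" for k x
  have "(hs k has_real_derivative hs (Suc k) x) (at x)" if "x \<in> J" for k x
  proof -
    have "(hs k has_real_derivative \<alpha> * g (Suc k) x + (\<alpha> * x + \<beta>) * g (Suc (Suc k)) x
        + (real k * \<alpha> - d * \<alpha>) * g (Suc k) x) (at x)"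
      unfolding hs_def using g that by (auto intro!: derivative_eq_intros)
    then show ?thesis
      unfolding hs_def by (simp add: algebra_simps)
  qed
  then have "\<forall>x\<in>J. (deriv ^^ k) (hs 0) x = hs k x" for k
    using higher_deriv_eq_chain[OF \<open>open J\<close>] by blast
  moreover have "\<forall>x\<in>J. (deriv ^^ k) H x = (deriv ^^ k) (hs 0) x" for k
    using higher_deriv_cong_open[OF \<open>open J\<close>] H unfolding hs_def by simp
  moreover have "\<forall>x\<in>J. (deriv ^^ k) (g 0) x = g k x" for k
    using higher_deriv_eq_chain[OF \<open>open J\<close> g] by blast
  ultimately have derivs: "(deriv ^^ k) H x = (\<alpha> * x + \<beta>) * (deriv ^^ Suc k) (g 0) x
      + (real k * \<alpha> - d * \<alpha>) * (deriv ^^ k) (g 0) x" if "x \<in> J" for k x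
    using that unfolding hs_def by presburger
  show "\<forall>x\<in>J. g 0 x = 0 \<longrightarrow> zero_mult (g 0) x \<le> zero_mult H x + 1"
  proof (intro ballI impI)
    fix x assume "x \<in> J"
    then show "zero_mult (g 0) x \<le> zero_mult H x + 1"
      using derivs
      by (intro zero_mult_le_Suc[where u = "\<lambda>_. \<alpha> * x + \<beta>" and v = "\<lambda>k. real k * \<alpha> - d * \<alpha>"])
  qed
  show "\<forall>x\<in>J. \<forall>y\<in>J. x < y \<longrightarrow> g 0 x = 0 \<longrightarrow> g 0 y = 0 \<longrightarrow> (\<exists>z\<in>J. x < z \<and> z < y \<and> H z = 0)"
  proof (intro ballI impI)
    fix x y assume xy: "x \<in> J" "y \<in> J" "x < y" "g 0 x = 0" "g 0 y = 0"
    then obtain z where z: "x < z" "z < y" "(\<alpha> * z + \<beta>) * g 1 z - d * \<alpha> * g 0 z = 0"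
      using weighted_rolle[OF \<open>connected J\<close> _ pos xy, where f' = "g 1" and d = d] g by auto
    moreover have "z \<in> J"
      using connected_contains_Icc[OF \<open>connected J\<close> xy(1,2)] z(1,2) by (auto simp: subset_iff)
    ultimately show "\<exists>z\<in>J. x < z \<and> z < y \<and> H z = 0"
      using H by auto
  qed
qed

section \<open>Sums of polynomials times powers of linear functions\<close>

lemma deg_less_iff: "deg p < int k \<longleftrightarrow> p = 0 \<or> degree p < k"
  by (auto simp: deg_def)

lemma deg_less_if_top_coeff_eq_0:
  assumes "degree p \<le> k" "coeff p k = 0"
  shows "deg p < int k"
  using assms unfolding deg_less_iff by (metis leading_coeff_0_iff le_neq_implies_less)

lemma degree_mult_lin_le:
  fixes p :: "'a::comm_semiring_0 poly"
  shows "degree ([:b, a:] * p) \<le> degree p + 1"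
proof -
  have "degree [:b, a:] \<le> 1" by simp
  then show ?thesis using degree_mult_le[of "[:b, a:]" p] by linarith
qed

lemma degree_pderiv_mult_lin_le:
  fixes A :: "'a::{idom,ring_char_0} poly"
  shows "degree (pderiv A * [:b, a:]) \<le> degree A"
proof (cases "degree A")
  case 0
  then have "pderiv A = 0" by (simp only: pderiv_eq_0_iff)
  then show ?thesis by simp
next
  case (Suc j)
  then show ?thesis
    using degree_mult_lin_le[of b a "pderiv A"] by (simp add: degree_pderiv mult.commute)
qed

lemma coeff_pderiv_mult_lin:
  fixes A :: "'a::{idom,ring_char_0} poly"
  assumes "degree A \<le> j"
  shows "coeff (pderiv A * [:b, a:]) j = a * of_nat j * coeff A j"
proof (cases j)
  case 0
  then have "coeff A 1 = 0" using assms by (simp add: coeff_eq_0)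
  then show ?thesis using 0 by (simp add: mult.commute[of _ "[:b, a:]"] coeff_pderiv)
next
  case (Suc i)
  then have "coeff A (Suc (Suc i)) = 0" using assms by (simp add: coeff_eq_0)
  then show ?thesis using Suc
    by (simp add: mult.commute[of _ "[:b, a:]"] coeff_pderiv algebra_simps)
qed

lemma deg_deriv_coeff_less:
  assumes "deg A < int k"
  shows "deg (pderiv A * [:b, a:] + smult c A) < int k"
proof -
  have "degree (pderiv A * [:b, a:] + smult c A) \<le> degree A"
    using degree_pderiv_mult_lin_le degree_smult_le by (rule degree_add_le)
  then show ?thesis
    using assms unfolding deg_less_iff by auto
qed

lemma deg_rolle_coeff_less:
  assumes "deg A < int k"
  shows "deg ([:\<beta>, \<alpha>:] * (pderiv A * [:b, a:] + smult ((d + 1 - real k) * a) A)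
      - smult (d * \<alpha>) (A * [:b, a:])) < int k"
proof (cases "A = 0")
  case False
  then obtain j where k: "k = Suc j" and A: "degree A \<le> j"
    using assms unfolding deg_less_iff by (cases k) auto
  define Q where "Q = pderiv A * [:b, a:] + smult ((d + 1 - real k) * a) A"
  have "deg Q < int k"
    unfolding Q_def by (rule deg_deriv_coeff_less[OF assms])
  then have Q: "degree Q \<le> j"
    unfolding deg_less_iff k by auto
  have "degree ([:\<beta>, \<alpha>:] * Q - smult (d * \<alpha>) (A * [:b, a:])) \<le> Suc j"
    using degree_mult_lin_le[of \<beta> \<alpha> Q] degree_mult_lin_le[of b a A] Q A
      degree_smult_le[of "d * \<alpha>" "A * [:b, a:]"]
    by (intro degree_diff_le) (auto simp: mult.commute)
  \<comment> \<open>Both products have top coefficient \<open>d * \<alpha> * a * coeff A j\<close>.\<close>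
  moreover have "coeff ([:\<beta>, \<alpha>:] * Q - smult (d * \<alpha>) (A * [:b, a:])) (Suc j) = 0"
  proof -
    have "coeff Q (Suc j) = 0" "coeff A (Suc j) = 0"
      using Q A by (simp_all add: coeff_eq_0)
    moreover have "coeff Q j = a * real j * coeff A j + (d + 1 - real k) * a * coeff A j"
      unfolding Q_def using coeff_pderiv_mult_lin[OF A] by simp
    ultimately show ?thesis
      by (simp add: k mult.commute[of A] algebra_simps)
  qed
  ultimately show ?thesis
    unfolding Q_def k by (rule deg_less_if_top_coeff_eq_0)
qed (simp add: deg_def)

lemma deg_rolle_coeff_self_less:
  assumes "deg A < int k"
  shows "deg (pderiv A * [:\<beta>, \<alpha>:] - smult (real (k - 1) * \<alpha>) A) < int (k - 1)"
proof (cases "A = 0")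
  case False
  then obtain j where k: "k = Suc j" and A: "degree A \<le> j"
    using assms unfolding deg_less_iff by (cases k) auto
  have "degree (pderiv A * [:\<beta>, \<alpha>:] - smult (real (k - 1) * \<alpha>) A) \<le> j"
    using degree_pderiv_mult_lin_le[of A \<beta> \<alpha>] degree_smult_le[of _ A] A
    by (intro degree_diff_le) auto
  moreover have "coeff (pderiv A * [:\<beta>, \<alpha>:] - smult (real (k - 1) * \<alpha>) A) j = 0"
    using coeff_pderiv_mult_lin[OF A] k by simp
  ultimately show ?thesis
    using k by (simp add: deg_less_if_top_coeff_eq_0)
qed (simp add: deg_def)

text \<open>
  \<open>deriv_coeffs\<close> and \<open>rolle_coeffs\<close> are the coefficients of \<open>f'\<close> and of \<open>(a\<^sub>j t + b\<^sub>j) f' - d a\<^sub>j f\<close>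
  for \<open>f = poly_powr_sum n A a b m d\<close>, both written as sums of the same shape with \<open>d - 1\<close>
  in place of \<open>d\<close>.
\<close>

definition poly_powr_sum ::
    "nat \<Rightarrow> (nat \<Rightarrow> real poly) \<Rightarrow> (nat \<Rightarrow> real) \<Rightarrow> (nat \<Rightarrow> real) \<Rightarrow> (nat \<Rightarrow> nat) \<Rightarrow> real \<Rightarrow> real \<Rightarrow> real"
  where "poly_powr_sum n A a b m d t = (\<Sum>i<n. poly (A i) t * (a i * t + b i) powr (d + 1 - real (m i)))"

definition deriv_coeffs ::
    "(nat \<Rightarrow> real poly) \<Rightarrow> (nat \<Rightarrow> real) \<Rightarrow> (nat \<Rightarrow> real) \<Rightarrow> (nat \<Rightarrow> nat) \<Rightarrow> real \<Rightarrow> nat \<Rightarrow> real poly"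
  where "deriv_coeffs A a b m d i = pderiv (A i) * [:b i, a i:] + smult ((d + 1 - real (m i)) * a i) (A i)"

fun higher_deriv_coeffs ::
    "(nat \<Rightarrow> real poly) \<Rightarrow> (nat \<Rightarrow> real) \<Rightarrow> (nat \<Rightarrow> real) \<Rightarrow> (nat \<Rightarrow> nat) \<Rightarrow> real \<Rightarrow> nat \<Rightarrow> nat \<Rightarrow> real poly"
  where
    "higher_deriv_coeffs A a b m d 0 = A"
  | "higher_deriv_coeffs A a b m d (Suc k) = deriv_coeffs (higher_deriv_coeffs A a b m d k) a b m (d - real k)"

text \<open>
  In the summand \<open>j\<close> the factor \<open>a\<^sub>j t + b\<^sub>j\<close> is absorbed into the power, lowering \<open>m\<^sub>j\<close> by one.
\<close>

definition rolle_coeffs ::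
    "(nat \<Rightarrow> real poly) \<Rightarrow> (nat \<Rightarrow> real) \<Rightarrow> (nat \<Rightarrow> real) \<Rightarrow> (nat \<Rightarrow> nat) \<Rightarrow> real \<Rightarrow> nat \<Rightarrow> nat \<Rightarrow> real poly"
  where "rolle_coeffs A a b m d j i =
    (if i = j then pderiv (A i) * [:b j, a j:] - smult (real (m i - 1) * a j) (A i)
     else [:b j, a j:] * deriv_coeffs A a b m d i - smult (d * a j) (A i * [:b i, a i:]))"

lemma has_real_derivative_poly_powr_sum:
  assumes "\<forall>i<n. a i * t + b i > 0"
  shows "(poly_powr_sum n A a b m d has_real_derivative
      poly_powr_sum n (deriv_coeffs A a b m d) a b m (d - 1) t) (at t)"
proof -
  have "((\<lambda>t. poly (A i) t * (a i * t + b i) powr (d + 1 - real (m i))) has_real_derivative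
      poly (deriv_coeffs A a b m d i) t * (a i * t + b i) powr (d - 1 + 1 - real (m i))) (at t)"
    if "i < n" for i
  proof -
    define lin where "lin t = a i * t + b i" for t
    define r where "r = d + 1 - real (m i)"
    have l: "lin t > 0" using assms that unfolding lin_def by blast
    have "(lin has_real_derivative a i * 1 + 0) (at t)"
      unfolding lin_def by (intro derivative_intros DERIV_cmult DERIV_ident)
    from DERIV_mult'[OF poly_DERIV DERIV_fun_powr[OF this l]]
    have "((\<lambda>t. poly (A i) t * lin t powr r) has_real_derivative
        poly (A i) t * (r * lin t powr (r - of_nat 1) * (a i * 1 + 0)) + poly (pderiv (A i)) t * lin t powr r) (at t)" .
    moreover have "lin t powr r = lin t * lin t powr (r - 1)"
      using l by (simp add: powr_diff)
    ultimately show ?thesis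
      unfolding deriv_coeffs_def lin_def r_def by (simp add: algebra_simps)
  qed
  then show ?thesis
    unfolding poly_powr_sum_def[abs_def] by (intro DERIV_sum) auto
qed

lemma poly_powr_sum_deriv_chain:
  assumes "\<forall>i<n. \<forall>t\<in>J. a i * t + b i > 0"
  shows "\<forall>k. \<forall>t\<in>J. (poly_powr_sum n (higher_deriv_coeffs A a b m d k) a b m (d - real k)
    has_real_derivative poly_powr_sum n (higher_deriv_coeffs A a b m d (Suc k)) a b m (d - real (Suc k)) t) (at t)"
proof (intro allI ballI)
  fix k t assume "t \<in> J"
  then have "\<forall>i<n. a i * t + b i > 0" using assms by blast
  from has_real_derivative_poly_powr_sum[OF this, of "higher_deriv_coeffs A a b m d k" m "d - real k"]
  show "(poly_powr_sum n (higher_deriv_coeffs A a b m d k) a b m (d - real k) has_real_derivative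
      poly_powr_sum n (higher_deriv_coeffs A a b m d (Suc k)) a b m (d - real (Suc k)) t) (at t)"
    by (simp add: algebra_simps)
qed

lemma poly_powr_sum_rolle_identity:
  assumes pos: "\<forall>i<n. a i * t + b i > 0" and "j < n" "m j \<ge> 1"
  shows "(a j * t + b j) * poly_powr_sum n (deriv_coeffs A a b m d) a b m (d - 1) t
      - d * a j * poly_powr_sum n A a b m d t
    = poly_powr_sum n (rolle_coeffs A a b m d j) a b (m(j := m j - 1)) (d - 1) t"
proof -
  have "(a j * t + b j) * (poly (deriv_coeffs A a b m d i) t * (a i * t + b i) powr (d - 1 + 1 - real (m i)))
      - d * a j * (poly (A i) t * (a i * t + b i) powr (d + 1 - real (m i)))
    = poly (rolle_coeffs A a b m d j i) t * (a i * t + b i) powr (d - 1 + 1 - real ((m(j := m j - 1)) i))"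
    if "i < n" for i
  proof -
    define q where "q = (a i * t + b i) powr (d - real (m i))"
    have "d + 1 - real (m i) = (d - real (m i)) + 1" by simp
    then have "(a i * t + b i) powr (d + 1 - real (m i)) = (a i * t + b i) * q"
      using pos that unfolding q_def by (simp only:) (simp add: powr_add less_imp_le)
    moreover have "d + 1 - real (m j) = d - 1 + 1 - real (m j - 1)"
      using \<open>m j \<ge> 1\<close> by (simp add: of_nat_diff)
    ultimately show ?thesis
      using \<open>m j \<ge> 1\<close> unfolding q_def
      by (cases "i = j") (simp_all add: rolle_coeffs_def deriv_coeffs_def of_nat_diff algebra_simps)
  qed
  then show ?thesis
    unfolding poly_powr_sum_def
    by (simp add: sum_distrib_left sum_subtractf[symmetric] mult.assoc)
qed

lemma deg_rolle_coeffs_less: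
  assumes "\<forall>i<n. deg (A i) < int (m i)"
  shows "\<forall>i<n. deg (rolle_coeffs A a b m d j i) < int ((m(j := m j - 1)) i)"
  using assms deg_rolle_coeff_self_less deg_rolle_coeff_less
  by (auto simp: rolle_coeffs_def deriv_coeffs_def)

lemma sum_fun_upd_pred:
  fixes m :: "'a \<Rightarrow> nat"
  assumes "finite S" "i \<in> S" "m i \<ge> 1"
  shows "sum (m(i := m i - 1)) S + 1 = sum m S"
proof -
  have "sum (m(i := m i - 1)) S = (m i - 1) + sum m (S - {i})"
    using assms(1,2) by (simp add: sum.remove)
  moreover have "sum m S = m i + sum m (S - {i})"
    using assms(1,2) by (simp add: sum.remove)
  ultimately show ?thesis
    using assms(3) by simp
qed

lemma poly_powr_sum_rolle_step:
  fixes A :: "nat \<Rightarrow> real poly" and d :: real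
  assumes "open J" "connected J"
    and pos: "\<forall>i<n. \<forall>t\<in>J. a i * t + b i > 0"
    and "j < n" "m j \<ge> 1"
  defines "f \<equiv> poly_powr_sum n A a b m d"
    and "H \<equiv> poly_powr_sum n (rolle_coeffs A a b m d j) a b (m(j := m j - 1)) (d - 1)"
  shows "num_zeros f J \<le> num_zeros H J + 1"
    and "\<forall>t\<in>J. H t = 0 \<Longrightarrow> x \<in> J \<Longrightarrow> y \<in> J \<Longrightarrow> f x = 0 \<Longrightarrow> f y = 0"
proof -
  define g where "g k = poly_powr_sum n (higher_deriv_coeffs A a b m d k) a b m (d - real k)" for k
  have g: "\<forall>k. \<forall>t\<in>J. (g k has_real_derivative g (Suc k) t) (at t)"
    unfolding g_def using poly_powr_sum_deriv_chain[OF pos] by simp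
  have pos_j: "\<forall>t\<in>J. a j * t + b j > 0"
    using pos \<open>j < n\<close> by blast
  have H: "\<forall>t\<in>J. H t = (a j * t + b j) * g 1 t - d * a j * g 0 t"
    using poly_powr_sum_rolle_identity[where j = j and m = m, OF _ \<open>j < n\<close> \<open>m j \<ge> 1\<close>] pos
    unfolding H_def g_def by simp
  have g0: "g 0 = f"
    unfolding g_def f_def by simp
  show "num_zeros f J \<le> num_zeros H J + 1"
    using num_zeros_le_Suc_weighted_deriv[OF assms(1,2) g pos_j H] unfolding g0 .
  assume "\<forall>t\<in>J. H t = 0" "x \<in> J" "y \<in> J" "f x = 0"
  moreover have "\<forall>t\<in>J. (a j * t + b j) * g 1 t - d * a j * g 0 t = 0"
    using H \<open>\<forall>t\<in>J. H t = 0\<close> by simp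
  moreover have "\<forall>t\<in>J. (g 0 has_real_derivative g 1 t) (at t)"
    using g by simp
  ultimately show "f y = 0"
    using weighted_deriv_eq_0_imp_zero_everywhere[OF \<open>connected J\<close> _ pos_j, of "g 0" "g 1" d x y]
    unfolding g0 by blast
qed

lemma num_zeros_poly_powr_sum_less:
  assumes "open J" "connected J"
    and pos: "\<forall>i<n. \<forall>t\<in>J. a i * t + b i > 0"
    and "\<forall>i<n. deg (A i) < int (m i)"
    and "\<exists>t\<in>J. poly_powr_sum n A a b m d t \<noteq> 0"
  shows "num_zeros (poly_powr_sum n A a b m d) J < enat (\<Sum>i<n. m i)"
  using assms(4,5)
proof (induction "\<Sum>i<n. m i" arbitrary: A m d rule: less_induct)
  case less
  define f where "f = poly_powr_sum n A a b m d"
  obtain j where j: "j < n" "A j \<noteq> 0"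
  proof (rule ccontr)
    assume "\<not> thesis"
    then have "\<forall>i<n. A i = 0" using that by blast
    then show False using less.prems(2) unfolding poly_powr_sum_def by simp
  qed
  then have "m j \<ge> 1"
    using less.prems(1) by (auto simp: deg_def)
  define H where "H = poly_powr_sum n (rolle_coeffs A a b m d j) a b (m(j := m j - 1)) (d - 1)"
  note step = poly_powr_sum_rolle_step[where j = j and m = m and A = A and d = d,
      OF assms(1-3) j(1) \<open>m j \<ge> 1\<close>, folded f_def H_def]
  show ?case
  proof (cases "\<forall>t\<in>J. H t = 0")
    case True
    obtain t where "t \<in> J" "f t \<noteq> 0"
      using less.prems(2) unfolding f_def by blast
    then have "{x \<in> J. f x = 0} = {}"
      using step(2)[OF True] by blast
    then have "num_zeros f J = 0"
      unfolding num_zeros_def by (simp only: finite.emptyI if_True sum.empty)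
    moreover have "m j \<le> (\<Sum>i<n. m i)"
      using j by (intro member_le_sum) auto
    ultimately show ?thesis
      using \<open>m j \<ge> 1\<close> unfolding f_def by (simp add: zero_enat_def)
  next
    case False
    have sum: "(\<Sum>i<n. (m(j := m j - 1)) i) + 1 = (\<Sum>i<n. m i)"
      using sum_fun_upd_pred[of "{..<n}" j m] j \<open>m j \<ge> 1\<close> by simp
    have "num_zeros H J < enat (\<Sum>i<n. (m(j := m j - 1)) i)"
      using less.hyps[of "m(j := m j - 1)"] sum deg_rolle_coeffs_less[OF less.prems(1)] False
      unfolding H_def by simp
    with step(1) show ?thesis
      unfolding f_def[symmetric] using sum
      by (cases "num_zeros H J") (auto simp: one_enat_def elim!: order.strict_trans1)
  qed
qed

section \<open>Sums with inverse square roots\<close>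

lemma deg_ge_minus_1: "deg p \<ge> -1"
  by (simp add: deg_def)

lemma num_zeros_sqrt_sum_less:
  fixes K :: nat and P :: "nat \<Rightarrow> real poly" and c :: "nat \<Rightarrow> real" and N :: int
  defines "F \<equiv> \<lambda>x. poly (P 0) x + (\<Sum>j=1..K. poly (P j) x * (1 / sqrt (x + c j)))"
  assumes "open J" "connected J"
    and pos: "\<forall>x\<in>J. \<forall>j\<in>{1..K}. x + c j > 0"
    and deg_P: "\<forall>j\<in>{1..K}. deg (P j) \<le> N" and "N \<ge> -1"
    and "\<exists>x\<in>J. F x \<noteq> 0"
  shows "num_zeros F J < enat (nat (deg (P 0) + 1) + K * nat (N + 1))"
proof -
  \<comment> \<open>\<open>P 0\<close> is the summand with linear factor 1, and \<open>d + 1 - m j = -1/2\<close> for \<open>j \<ge> 1\<close>.\<close>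
  define a :: "nat \<Rightarrow> real" where "a i = (if i = 0 then 0 else 1)" for i
  define b :: "nat \<Rightarrow> real" where "b i = (if i = 0 then 1 else c i)" for i
  define m where "m i = (if i = 0 then nat (deg (P 0) + 1) else nat (N + 1))" for i :: nat
  define d :: real where "d = N - 1/2"
  have range: "{..<Suc K} = insert 0 {1..K}"
    by auto
  have pos': "\<forall>i<Suc K. \<forall>t\<in>J. a i * t + b i > 0"
    using pos unfolding a_def b_def by (auto simp: range)
  have "F x = poly_powr_sum (Suc K) P a b m d x" if "x \<in> J" for x
  proof -
    have "(x + c j) powr (d + 1 - real (m j)) = 1 / sqrt (x + c j)" if "j \<in> {1..K}" for j
    proof -
      have "d + 1 - real (m j) = - (1/2)"
        using that \<open>N \<ge> -1\<close> unfolding m_def d_def by (simp add: of_nat_nat)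
      moreover have "x + c j > 0"
        using pos \<open>x \<in> J\<close> that by blast
      ultimately show ?thesis
        by (simp add: powr_minus_divide powr_half_sqrt)
    qed
    then show ?thesis
      unfolding F_def poly_powr_sum_def range
      by (simp add: a_def b_def sum.insert_remove)
  qed
  then have "num_zeros F J = num_zeros (poly_powr_sum (Suc K) P a b m d) J"
    using num_zeros_cong_open[OF \<open>open J\<close>] by blast
  also have "\<dots> < enat (\<Sum>i<Suc K. m i)"
  proof (rule num_zeros_poly_powr_sum_less[OF \<open>open J\<close> \<open>connected J\<close> pos'])
    show "\<forall>i<Suc K. deg (P i) < int (m i)"
      using deg_P deg_ge_minus_1 \<open>N \<ge> -1\<close> unfolding m_def by (auto simp: range)
    show "\<exists>t\<in>J. poly_powr_sum (Suc K) P a b m d t \<noteq> 0"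
      using \<open>\<exists>x\<in>J. F x \<noteq> 0\<close> \<open>\<And>x. x \<in> J \<Longrightarrow> F x = _\<close> by auto
  qed
  also have "(\<Sum>i<Suc K. m i) = nat (deg (P 0) + 1) + K * nat (N + 1)"
    unfolding range by (simp add: m_def)
  finally show ?thesis .
qed

theorem theorem1p2:
  fixes K :: nat and P :: "nat \<Rightarrow> real poly" and c :: "nat \<Rightarrow> real"
    and F :: "real \<Rightarrow> real" and I :: "real set"
  assumes "K \<ge> 1"
    and "F = (\<lambda>x. poly (P 0) x + (\<Sum>j=1..K. poly (P j) x * (1 / sqrt (x + c j))))"
    and "I = {- Min (c ` {1..K})<..}"
    and "\<exists>x\<in>I. F x \<noteq> 0"
  shows "\<exists>n. num_zeros F I = enat n \<and>
           int n \<le> int K * (Max ((\<lambda>j. deg (P j)) ` {1..K}) + 1) + deg (P 0)"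
proof -
  define N where "N = Max ((\<lambda>j. deg (P j)) ` {1..K})"
  have deg_P: "\<forall>j\<in>{1..K}. deg (P j) \<le> N"
    unfolding N_def by simp
  have "N \<ge> -1"
    using deg_P deg_ge_minus_1[of "P 1"] \<open>K \<ge> 1\<close> by force
  have "\<forall>x\<in>I. \<forall>j\<in>{1..K}. x + c j > 0"
  proof (intro ballI)
    fix x j assume "x \<in> I" "j \<in> {1..K}"
    then show "x + c j > 0"
      using Min_le[of "c ` {1..K}" "c j"] unfolding assms(3) by force
  qed
  then have "num_zeros F I < enat (nat (deg (P 0) + 1) + K * nat (N + 1))"
    using num_zeros_sqrt_sum_less[of I K c P N] assms(2-4) deg_P \<open>N \<ge> -1\<close> by simp
  then obtain n where n: "num_zeros F I = enat n" "n < nat (deg (P 0) + 1) + K * nat (N + 1)"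
    by (cases "num_zeros F I") auto
  then have "int n < int (nat (deg (P 0) + 1)) + int K * int (nat (N + 1))"
    by (metis of_nat_add of_nat_less_iff of_nat_mult)
  then have "int n \<le> int K * (N + 1) + deg (P 0)"
    using \<open>N \<ge> -1\<close> deg_ge_minus_1[of "P 0"] by simp
  with n(1) show ?thesis
    unfolding N_def by blast
qed

end
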